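(* Let $F$ be an infinite field (e.g. $\mathbb{R}$ or $\mathbb{C}$), let $V$ be a vector space over $F$, and let $n\ge 1$. A widget with $n$ pairs in $V$ is valid if and only if it is full and contains a legal subwidget.
   Context: A widget with $n$ pairs in $V$ is an indexed family of $n$ pairs of vectors $p_i=(p_i^+,p_i^-)$, $i=1,\dots,n$, in $V$ (the vectors $p_i^+,p_i^-$ are called the points of the pair $p_i$). A section of a widget is a set of points containing at most one point from each pair. A widget with $n$ pairs is legal if every section spans a linear subspace of $V$ of dimension at most $n-1$. A widget with $n$ pairs is full if the linear span of all its $2n$ points has dimension at least $n$. A widget is valid if it is both legal and full. A subwidget of a widget with $n$ pairs is the widget formed by some $k$ of its pairs with $1\le k<n$; it is itself a widget with $k$ pairs, so it is legal if every one of its sections spans a subspace of dimension at most $k-1$. *)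

theory Defs
  imports Complex_Main
begin

text \<open>We allow an arbitrary finite index set J of pairs; a widget with n pairs
  uses the index set {..<n}, and a subwidget is given by a subset J of the
  indices.\<close>

definition pt :: "('v \<times> 'v) \<Rightarrow> bool \<Rightarrow> 'v" where
  "pt q b = (if b then fst q else snd q)"

definition widget_sections :: "nat set \<Rightarrow> (nat \<Rightarrow> 'v \<times> 'v) \<Rightarrow> 'v set set" where
  "widget_sections J p = {(\<lambda>i. pt (p i) (s i)) ` I | I s. I \<subseteq> J}"

definition widget_legal ::
  "('a::field \<Rightarrow> 'v::ab_group_add \<Rightarrow> 'v) \<Rightarrow> nat set \<Rightarrow> (nat \<Rightarrow> 'v \<times> 'v) \<Rightarrow> bool" where
  "widget_legal scale J p \<longleftrightarrow>
     (\<forall>S \<in> widget_sections J p. vector_space.dim scale S \<le> card J - 1)"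

definition widget_full ::
  "('a::field \<Rightarrow> 'v::ab_group_add \<Rightarrow> 'v) \<Rightarrow> nat set \<Rightarrow> (nat \<Rightarrow> 'v \<times> 'v) \<Rightarrow> bool" where
  "widget_full scale J p \<longleftrightarrow>
     card J \<le> vector_space.dim scale (fst ` p ` J \<union> snd ` p ` J)"

definition widget_valid ::
  "('a::field \<Rightarrow> 'v::ab_group_add \<Rightarrow> 'v) \<Rightarrow> nat set \<Rightarrow> (nat \<Rightarrow> 'v \<times> 'v) \<Rightarrow> bool" where
  "widget_valid scale J p \<longleftrightarrow> widget_legal scale J p \<and> widget_full scale J p"

definition has_legal_subwidget ::
  "('a::field \<Rightarrow> 'v::ab_group_add \<Rightarrow> 'v) \<Rightarrow> nat set \<Rightarrow> (nat \<Rightarrow> 'v \<times> 'v) \<Rightarrow> bool" where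
  "has_legal_subwidget scale J p \<longleftrightarrow>
     (\<exists>K. K \<subseteq> J \<and> 1 \<le> card K \<and> card K < card J \<and> widget_legal scale K p)"

end

theory Submission
  imports Defs
begin

text \<open>A widget is valid iff it is full and legal, and legality of the whole widget is
  equivalent to the existence of a nonempty set K of pairs whose 2|K| points span
  fewer than |K| dimensions. One direction is Rado's theorem: if every K spans at
  least |K| dimensions, one can pick one point per pair spanning n dimensions, a
  section violating legality. Fullness rules out K being everything, so such a K
  gives a legal proper subwidget. Conversely, a legal subwidget on K forces every
  section to have rank at most (|K| - 1) + (n - |K|).\<close>

definition rado_condition ::
  "('a::field \<Rightarrow> 'v::ab_group_add \<Rightarrow> 'v) \<Rightarrow> 'i set \<Rightarrow> ('i \<Rightarrow> 'v set) \<Rightarrow> bool" where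
  "rado_condition scale J A \<longleftrightarrow> (\<forall>K\<subseteq>J. card K \<le> vector_space.dim scale (\<Union>(A ` K)))"

lemma widget_section_subset_points:
  assumes "S \<in> widget_sections K p"
  shows "S \<subseteq> fst ` p ` K \<union> snd ` p ` K"
proof -
  obtain I s where "S = (\<lambda>i. pt (p i) (s i)) ` I" "I \<subseteq> K"
    using assms unfolding widget_sections_def by blast
  then show ?thesis
    unfolding pt_def by auto
qed

lemma transversal_in_widget_sections:
  assumes "\<forall>i\<in>J. f i \<in> {fst (p i), snd (p i)}"
  shows "f ` J \<in> widget_sections J p"
proof -
  have "f ` J = (\<lambda>i. pt (p i) (f i = fst (p i))) ` J"
    using assms by (intro image_cong) (auto simp: pt_def)
  then show ?thesis
    unfolding widget_sections_def by (auto intro!: exI[of _ J])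
qed

context vector_space
begin

lemma dim_subset_finite:
  assumes "S \<subseteq> T" "finite T"
  shows "dim S \<le> dim T"
proof -
  obtain B where B: "B \<subseteq> T" "independent B" "T \<subseteq> span B"
    by (rule maximal_independent_subset)
  have "dim S \<le> card B"
    using B assms finite_subset by (intro dim_le_card) auto
  also have "card B = dim T"
    using B by (intro dim_unique[symmetric]) auto
  finally show ?thesis .
qed

lemma dim_Un_Int_le:
  assumes "finite S" "finite T"
  shows "dim (S \<union> T) + dim (S \<inter> T) \<le> dim S + dim T"
proof -
  obtain C where C: "C \<subseteq> S \<inter> T" "independent C" "S \<inter> T \<subseteq> span C"
    by (rule maximal_independent_subset)
  obtain B1 where B1: "C \<subseteq> B1" "B1 \<subseteq> S" "independent B1" "S \<subseteq> span B1"
    using maximal_independent_subset_extend[of C S] C by blast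
  obtain B2 where B2: "C \<subseteq> B2" "B2 \<subseteq> T" "independent B2" "T \<subseteq> span B2"
    using maximal_independent_subset_extend[of C T] C by blast
  have fin: "finite B1" "finite B2"
    using B1 B2 assms finite_subset by blast+
  have "S \<union> T \<subseteq> span (B1 \<union> B2)"
    using B1 B2 span_mono[of B1 "B1 \<union> B2"] span_mono[of B2 "B1 \<union> B2"] by blast
  then have "dim (S \<union> T) \<le> card (B1 \<union> B2)"
    using dim_le_card fin by blast
  moreover have "card C \<le> card (B1 \<inter> B2)"
    using B1 B2 fin by (intro card_mono) auto
  moreover have "card (B1 \<union> B2) + card (B1 \<inter> B2) = card B1 + card B2"
    using card_Un_Int[OF fin] by linarith
  moreover have "dim S = card B1" "dim T = card B2" "dim (S \<inter> T) = card C"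
    using dim_unique B1 B2 C by blast+
  ultimately show ?thesis by linarith
qed

text \<open>Deleting x from A i and deleting y from A i cannot both violate the condition:
  violating sets K1, K2 must both contain i, and submodularity of dim applied to
  the unions over K1 and K2 then contradicts the condition for K1 \<union> K2 and
  K1 \<inter> K2 - {i}.\<close>
lemma rado_condition_remove_point:
  assumes rado: "rado_condition scale J A" and "finite J" and fin: "\<forall>j\<in>J. finite (A j)"
    and "i \<in> J" "x \<in> A i" "y \<in> A i" "x \<noteq> y"
  shows "rado_condition scale J (A(i := A i - {x})) \<or> rado_condition scale J (A(i := A i - {y}))"
proof (rule ccontr)
  define A1 where "A1 = A(i := A i - {x})"
  define A2 where "A2 = A(i := A i - {y})"
  assume "\<not> ?thesis"
  then obtain K1 K2 where K1: "K1 \<subseteq> J" "dim (\<Union>(A1 ` K1)) < card K1"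
    and K2: "K2 \<subseteq> J" "dim (\<Union>(A2 ` K2)) < card K2"
    unfolding rado_condition_def A1_def A2_def by (auto simp: not_le)
  have rado_le: "card K \<le> dim (\<Union>(A ` K))" if "K \<subseteq> J" for K
    using rado that unfolding rado_condition_def by blast
  have "A1 ` K1 \<noteq> A ` K1" "A2 ` K2 \<noteq> A ` K2"
    using rado_le K1 K2 by (metis not_le)+
  then have i_in: "i \<in> K1" "i \<in> K2"
    unfolding A1_def A2_def by auto
  define S1 where "S1 = \<Union>(A1 ` K1)"
  define S2 where "S2 = \<Union>(A2 ` K2)"
  have finK: "finite K1" "finite K2"
    using K1 K2 \<open>finite J\<close> finite_subset by blast+
  have finS: "finite S1" "finite S2"
    using finK K1 K2 fin unfolding S1_def S2_def A1_def A2_def by auto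
  have "\<Union>(A ` (K1 \<union> K2)) \<subseteq> S1 \<union> S2"
    using i_in \<open>x \<noteq> y\<close> unfolding S1_def S2_def A1_def A2_def by fastforce
  then have "dim (\<Union>(A ` (K1 \<union> K2))) \<le> dim (S1 \<union> S2)"
    using finS by (intro dim_subset_finite) auto
  then have union: "card (K1 \<union> K2) \<le> dim (S1 \<union> S2)"
    using rado_le[of "K1 \<union> K2"] K1 K2 by simp
  have "\<Union>(A ` (K1 \<inter> K2 - {i})) \<subseteq> S1 \<inter> S2"
    unfolding S1_def S2_def A1_def A2_def by auto
  then have "dim (\<Union>(A ` (K1 \<inter> K2 - {i}))) \<le> dim (S1 \<inter> S2)"
    using finS by (intro dim_subset_finite) auto
  moreover have "K1 \<inter> K2 - {i} \<subseteq> J"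
    using K1 by blast
  ultimately have inter: "card (K1 \<inter> K2 - {i}) \<le> dim (S1 \<inter> S2)"
    using rado_le le_trans by blast
  have "card (K1 \<inter> K2 - {i}) + 1 = card (K1 \<inter> K2)"
  proof -
    have "card (K1 \<inter> K2) > 0"
      using i_in finK by (auto simp: card_gt_0_iff)
    then show ?thesis
      using i_in by (simp add: card_Diff_singleton)
  qed
  moreover have "card (K1 \<union> K2) + card (K1 \<inter> K2) = card K1 + card K2"
    using card_Un_Int[OF finK] by linarith
  ultimately show False
    using union inter dim_Un_Int_le[OF finS] K1(2) K2(2) unfolding S1_def S2_def
    by linarith
qed

lemma rado_condition_nonempty:
  assumes "rado_condition scale J A" "i \<in> J"
  shows "A i \<noteq> {}"
proof
  have "card {i} \<le> dim (\<Union>(A ` {i}))"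
    using assms unfolding rado_condition_def by blast
  moreover assume "A i = {}"
  ultimately show False
    using dim_eq_card_independent[OF independent_empty] by simp
qed

text \<open>Rado's theorem for the rank function dim, by induction on the total size of the
  family: if some A i has two points, one of them can be discarded.\<close>
theorem rado_transversal:
  assumes "finite J" "\<forall>i\<in>J. finite (A i)" "rado_condition scale J A"
  shows "\<exists>f. (\<forall>i\<in>J. f i \<in> A i) \<and> card J \<le> dim (f ` J)"
  using assms(2,3)
proof (induction "\<Sum>i\<in>J. card (A i)" arbitrary: A rule: less_induct)
  case (less A)
  show ?case
  proof (cases "\<exists>i\<in>J. 2 \<le> card (A i)")
    case False
    have card_one: "card (A i) = 1" if "i \<in> J" for i
    proof -
      have "card (A i) \<noteq> 0"
        using rado_condition_nonempty[OF less.prems(2) that] less.prems(1) that by simp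
      then show ?thesis using False that by fastforce
    qed
    define f where "f i = the_elem (A i)" for i
    have single: "A i = {f i}" if "i \<in> J" for i
      using card_one[OF that] unfolding f_def
      by (metis card_1_singletonE the_elem_eq)
    then have "\<Union>(A ` J) = f ` J"
      by auto
    with single less.prems(2) show ?thesis
      unfolding rado_condition_def by (intro exI[of _ f]) auto
  next
    case True
    then obtain i where "i \<in> J" "2 \<le> card (A i)" by blast
    then obtain P where "P \<subseteq> A i" "card P = 2"
      by (meson obtain_subset_with_card_n)
    then obtain x y where xy: "x \<in> A i" "y \<in> A i" "x \<noteq> y"
      by (auto simp: card_2_iff)
    obtain z where z: "z \<in> A i" and rado: "rado_condition scale J (A(i := A i - {z}))"
      using rado_condition_remove_point[OF less.prems(2) assms(1) less.prems(1) \<open>i \<in> J\<close> xy]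
        xy by blast
    define B where "B = A(i := A i - {z})"
    have "card (B i) < card (A i)"
      unfolding B_def fun_upd_same using z less.prems(1) \<open>i \<in> J\<close>
      by (intro card_Diff1_less) auto
    then have "(\<Sum>j\<in>J. card (B j)) < (\<Sum>j\<in>J. card (A j))"
      using \<open>i \<in> J\<close> assms(1) unfolding B_def
      by (intro sum_strict_mono_ex1) auto
    moreover have "\<forall>j\<in>J. finite (B j)"
      using less.prems(1) unfolding B_def by auto
    ultimately obtain f where "\<forall>j\<in>J. f j \<in> B j" "card J \<le> dim (f ` J)"
      using less.hyps rado unfolding B_def by blast
    then show ?thesis
      unfolding B_def by (intro exI[of _ f]) (auto split: if_splits)
  qed
qed

lemma widget_legal_if_dim_points_less:
  assumes "finite K" "dim (fst ` p ` K \<union> snd ` p ` K) < card K"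
  shows "widget_legal scale K p"
  unfolding widget_legal_def
proof
  fix S assume "S \<in> widget_sections K p"
  then have "S \<subseteq> fst ` p ` K \<union> snd ` p ` K"
    by (rule widget_section_subset_points)
  then have "dim S \<le> dim (fst ` p ` K \<union> snd ` p ` K)"
    using assms(1) by (intro dim_subset_finite) auto
  then show "dim S \<le> card K - 1"
    using assms(2) by linarith
qed

lemma not_rado_condition_if_widget_legal:
  assumes "finite J" "J \<noteq> {}" "widget_legal scale J p"
  shows "\<not> rado_condition scale J (\<lambda>i. {fst (p i), snd (p i)})"
proof
  assume "rado_condition scale J (\<lambda>i. {fst (p i), snd (p i)})"
  then have "\<exists>f. (\<forall>i\<in>J. f i \<in> {fst (p i), snd (p i)}) \<and> card J \<le> dim (f ` J)"
    by (intro rado_transversal[OF assms(1)]) auto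
  then obtain f where f: "\<forall>i\<in>J. f i \<in> {fst (p i), snd (p i)}" "card J \<le> dim (f ` J)"
    by blast
  have "dim (f ` J) \<le> card J - 1"
    using assms(3) transversal_in_widget_sections[OF f(1)] unfolding widget_legal_def by blast
  moreover have "card J > 0"
    using assms(1,2) by (simp add: card_gt_0_iff)
  ultimately show False
    using f(2) by linarith
qed

lemma has_legal_subwidget_if_widget_valid:
  assumes "finite J" "J \<noteq> {}" "widget_valid scale J p"
  shows "has_legal_subwidget scale J p"
proof -
  have "\<not> rado_condition scale J (\<lambda>i. {fst (p i), snd (p i)})"
    using not_rado_condition_if_widget_legal[OF assms(1,2)] assms(3)
    unfolding widget_valid_def by blast
  then obtain K where K: "K \<subseteq> J" "dim (\<Union>i\<in>K. {fst (p i), snd (p i)}) < card K"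
    unfolding rado_condition_def by (auto simp: not_le)
  have points: "(\<Union>i\<in>K. {fst (p i), snd (p i)}) = fst ` p ` K \<union> snd ` p ` K"
    by auto
  have "K \<noteq> J"
  proof
    assume "K = J"
    then show False
      using K(2) assms(3) unfolding points widget_valid_def widget_full_def by simp
  qed
  then have "card K < card J"
    using K(1) assms(1) by (intro psubset_card_mono) auto
  moreover have "widget_legal scale K p"
    using K(2) unfolding points
    by (intro widget_legal_if_dim_points_less finite_subset[OF K(1) assms(1)])
  moreover have "1 \<le> card K"
    using K(2) by linarith
  ultimately show ?thesis
    using K(1) unfolding has_legal_subwidget_def by blast
qed

text \<open>A section of the big widget splits into its part over K, of rank at most
  |K| - 1 by legality of the subwidget, and at most |J| - |K| further points.\<close>
lemma widget_legal_if_has_legal_subwidget: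
  assumes "finite J" "has_legal_subwidget scale J p"
  shows "widget_legal scale J p"
  unfolding widget_legal_def
proof
  obtain K where K: "K \<subseteq> J" "1 \<le> card K" "widget_legal scale K p"
    using assms(2) unfolding has_legal_subwidget_def by blast
  fix S assume "S \<in> widget_sections J p"
  then obtain I s where S: "S = (\<lambda>i. pt (p i) (s i)) ` I" "I \<subseteq> J"
    unfolding widget_sections_def by blast
  define g where "g i = pt (p i) (s i)" for i
  have finI: "finite I"
    using S(2) assms(1) finite_subset by blast
  have "g ` (I \<inter> K) \<in> widget_sections K p"
    unfolding widget_sections_def g_def by blast
  then have inside: "dim (g ` (I \<inter> K)) \<le> card K - 1"
    using K(3) unfolding widget_legal_def by blast
  have "dim (g ` (I - K)) \<le> card (g ` (I - K))"
    using finI by (intro dim_le_card) (auto intro: span_base)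
  also have "\<dots> \<le> card (I - K)"
    using finI by (intro card_image_le) auto
  also have "\<dots> \<le> card (J - K)"
    using S(2) assms(1) by (intro card_mono) auto
  also have "\<dots> = card J - card K"
    using K(1) assms(1) by (simp add: card_Diff_subset finite_subset)
  finally have outside: "dim (g ` (I - K)) \<le> card J - card K" .
  have "S = g ` (I \<inter> K) \<union> g ` (I - K)"
    using S(1) unfolding g_def by blast
  then have "dim S \<le> dim (g ` (I \<inter> K)) + dim (g ` (I - K))"
    using dim_Un_Int_le[of "g ` (I \<inter> K)" "g ` (I - K)"] finI by simp
  moreover have "card K \<le> card J"
    using K(1) assms(1) by (rule card_mono[rotated])
  ultimately show "dim S \<le> card J - 1"
    using inside outside K(2) by linarith
qed

end

theorem corollary1p1:
  fixes scale :: "'a::field \<Rightarrow> 'v::ab_group_add \<Rightarrow> 'v"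
    and n :: nat and p :: "nat \<Rightarrow> 'v \<times> 'v"
  assumes "vector_space scale"
    and "infinite (UNIV :: 'a set)"
    and "n \<ge> 1"
  shows "widget_valid scale {..<n} p \<longleftrightarrow>
           widget_full scale {..<n} p \<and> has_legal_subwidget scale {..<n} p"
proof -
  \<comment> \<open>The field need not be infinite.\<close>
  interpret vector_space scale by fact
  have "{..<n} \<noteq> {}"
    using \<open>n \<ge> 1\<close> by (simp add: lessThan_empty_iff)
  then show ?thesis
    using has_legal_subwidget_if_widget_valid[OF finite_lessThan]
      widget_legal_if_has_legal_subwidget[OF finite_lessThan]
    unfolding widget_valid_def by blast
qed

end
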